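(* Let $X$ be a topological space and let $D\subseteq X$ be such that the subspace $D$ is discrete. Then $D$ admits a Noetherian outer base in $X$.
   Context: A family $\mathcal G$ of open sets is Noetherian if $\langle\mathcal G,\subseteq\rangle$ contains no infinite strictly increasing sequence. For $Y\subseteq X$, a family $\mathcal B$ of open subsets of $X$ is an outer base of $Y$ in $X$ if for every $p\in Y$ the family $\{G\in\mathcal B: p\in G\}$ is a neighbourhood base of $p$ in $X$. *)

theory Defs
  imports "HOL-Analysis.Analysis"
begin

definition noetherian_family :: "'a set set \<Rightarrow> bool" where
  "noetherian_family \<G> \<longleftrightarrow> \<not> (\<exists>f :: nat \<Rightarrow> 'a set. (\<forall>n. f n \<in> \<G>) \<and> (\<forall>n. f n \<subset> f (Suc n)))"

definition nhood_base_at :: "'a topology \<Rightarrow> 'a set set \<Rightarrow> 'a \<Rightarrow> bool" where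
  "nhood_base_at X \<B> p \<longleftrightarrow>
     (\<forall>G\<in>\<B>. openin X G \<and> p \<in> G) \<and>
     (\<forall>U. openin X U \<and> p \<in> U \<longrightarrow> (\<exists>G\<in>\<B>. G \<subseteq> U))"

definition outer_base :: "'a topology \<Rightarrow> 'a set \<Rightarrow> 'a set set \<Rightarrow> bool" where
  "outer_base X Y \<B> \<longleftrightarrow>
     (\<forall>G\<in>\<B>. openin X G) \<and> (\<forall>p\<in>Y. nhood_base_at X {G\<in>\<B>. p \<in> G} p)"

end

theory Submission
  imports Defs
begin

text \<open>Fix a well-order of all sets and let \<N> consist of the open sets meeting D in exactly
  one point. Keep those V \<in> \<N> such that no member of \<N> contained in V precedes V. The
  earliest member of \<N> inside a given V \<in> \<N> is kept, and as D is discrete this makes the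
  kept sets an outer base of D. If V \<subset> V' are both kept, then V' must precede V, so a strictly
  increasing sequence of kept sets would descend forever in the well-order.\<close>

lemma ex_wf_total_relation:
  obtains R :: "'a rel" where "wf R" and "\<And>x y. x \<noteq> y \<Longrightarrow> (x, y) \<in> R \<or> (y, x) \<in> R"
proof -
  obtain r :: "'a rel" where r: "Well_order r" "Field r = UNIV"
    using well_ordering[where 'a='a] by blast
  then have "wf (r - Id)" and "total_on UNIV r"
    by (simp_all add: well_order_on_def linear_order_on_def)
  then show thesis
    using that[of "r - Id"] unfolding total_on_def by blast
qed

definition minimal_subfamily :: "'a set rel \<Rightarrow> 'a set set \<Rightarrow> 'a set set" where
  "minimal_subfamily R \<N> = {V \<in> \<N>. \<forall>W\<in>\<N>. W \<subseteq> V \<longrightarrow> (W, V) \<notin> R}"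

lemma minimal_subfamily_subset: "minimal_subfamily R \<N> \<subseteq> \<N>"
  by (auto simp: minimal_subfamily_def)

lemma ex_minimal_subfamily_below:
  assumes "wf R" and "V \<in> \<N>"
  obtains W where "W \<in> minimal_subfamily R \<N>" and "W \<subseteq> V"
proof -
  obtain W where W: "W \<in> {W \<in> \<N>. W \<subseteq> V}"
    and least: "\<And>Y. (Y, W) \<in> R \<Longrightarrow> Y \<notin> {W \<in> \<N>. W \<subseteq> V}"
    using wfE_min[OF assms(1), of V "{W \<in> \<N>. W \<subseteq> V}"] assms(2) by blast
  have "W \<in> minimal_subfamily R \<N>"
    using W least by (auto simp: minimal_subfamily_def)
  with W show thesis
    using that by blast
qed

lemma noetherian_minimal_subfamily:
  assumes "wf R" and total: "\<And>x y. x \<noteq> y \<Longrightarrow> (x, y) \<in> R \<or> (y, x) \<in> R"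
  shows "noetherian_family (minimal_subfamily R \<N>)"
  unfolding noetherian_family_def
proof
  assume "\<exists>f. (\<forall>n. f n \<in> minimal_subfamily R \<N>) \<and> (\<forall>n. f n \<subset> f (Suc n))"
  then obtain f where f: "\<And>n. f n \<in> minimal_subfamily R \<N>" and incr: "\<And>n. f n \<subset> f (Suc n)"
    by blast
  have "(f (Suc n), f n) \<in> R" for n
  proof -
    have "f n \<in> \<N>" and "f n \<subseteq> f (Suc n)"
      using f[of n] incr[of n] by (auto simp: minimal_subfamily_def)
    then have "(f n, f (Suc n)) \<notin> R"
      using f[of "Suc n"] unfolding minimal_subfamily_def by blast
    moreover have "f n \<noteq> f (Suc n)"
      using incr[of n] by blast
    ultimately show ?thesis
      using total[of "f n" "f (Suc n)"] by blast
  qed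
  then show False
    using \<open>wf R\<close> unfolding wf_iff_no_infinite_down_chain by blast
qed

lemma isolated_in_discrete_subtopology:
  assumes "subtopology X D = discrete_topology D" and "p \<in> D"
  obtains V where "openin X V" and "V \<inter> D = {p}"
proof -
  have "openin (subtopology X D) {p}"
    using assms by simp
  then show thesis
    using that by (auto simp: openin_subtopology)
qed

lemma outer_base_minimal_subfamily:
  assumes "wf R" and discrete: "subtopology X D = discrete_topology D"
  shows "outer_base X D (minimal_subfamily R {V. openin X V \<and> (\<exists>d. V \<inter> D = {d})})"
    (is "outer_base X D (minimal_subfamily R ?\<N>)")
proof -
  have open_\<N>: "openin X G" if "G \<in> minimal_subfamily R ?\<N>" for G
    using that minimal_subfamily_subset[of R ?\<N>] by blast
  have "\<exists>G\<in>minimal_subfamily R ?\<N>. p \<in> G \<and> G \<subseteq> U" if "p \<in> D" "openin X U" "p \<in> U" for p U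
  proof -
    obtain V where "openin X V" "V \<inter> D = {p}"
      using isolated_in_discrete_subtopology[OF discrete \<open>p \<in> D\<close>] by blast
    with that have UV_in: "U \<inter> V \<in> ?\<N>" and UV: "U \<inter> V \<inter> D = {p}"
      by auto
    obtain G where G: "G \<in> minimal_subfamily R ?\<N>" "G \<subseteq> U \<inter> V"
      using ex_minimal_subfamily_below[OF \<open>wf R\<close> UV_in] by blast
    obtain d where d: "G \<inter> D = {d}"
      using G(1) minimal_subfamily_subset[of R ?\<N>] by blast
    have "d \<in> U \<inter> V \<inter> D"
      using d G(2) by blast
    with UV d G show ?thesis
      by auto
  qed
  then show ?thesis
    using open_\<N> unfolding outer_base_def nhood_base_at_def by blast
qed

theorem corollary1:
  fixes X :: "'a topology" and D :: "'a set"
  assumes "D \<subseteq> topspace X"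
    and "subtopology X D = discrete_topology D"
  shows "\<exists>\<B>. outer_base X D \<B> \<and> noetherian_family \<B>"
proof -
  obtain R :: "'a set rel" where R: "wf R" "\<And>x y. x \<noteq> y \<Longrightarrow> (x, y) \<in> R \<or> (y, x) \<in> R"
    using ex_wf_total_relation[where 'a="'a set"] by metis
  let ?\<B> = "minimal_subfamily R {V. openin X V \<and> (\<exists>d. V \<inter> D = {d})}"
  have "outer_base X D ?\<B>"
    using R(1) assms(2) by (rule outer_base_minimal_subfamily)
  moreover have "noetherian_family ?\<B>"
    using R by (rule noetherian_minimal_subfamily)
  ultimately show ?thesis
    by blast
qed

end
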